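(* Let $T$ be a weighted tree that is not a star. If $T$ has at least two adjacent pendant edges (two pendant edges sharing a vertex), then $T^{\#}$ is not a tree.
   Context: A weighted tree has a nonzero real weight on each edge; its adjacency matrix $A$ has $(i,j)$ entry equal to the weight of edge $v_iv_j$, or $0$ if no edge. $A^{\#}$ is the group inverse of $A$ (unique $X$ with $AXA=A$, $XAX=X$, $AX=XA$). The group inverse graph $T^{\#}$ is the weighted graph on the same vertex set as $T$ with $v_iv_j$ an edge iff $(A^{\#})_{ij}\neq0$, weighted by that entry. A pendant edge is an edge incident to a vertex of degree one. *)

theory Defs
  imports Complex_Main
begin

text \<open>Square real matrices of size n are represented as functions nat => nat => real,
  only the entries with indices below n being relevant. Vertex v_i is the index i.\<close>

definition mmul :: "nat \<Rightarrow> (nat \<Rightarrow> nat \<Rightarrow> real) \<Rightarrow> (nat \<Rightarrow> nat \<Rightarrow> real) \<Rightarrow> nat \<Rightarrow> nat \<Rightarrow> real" where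
  "mmul n A B i j = (\<Sum>k<n. A i k * B k j)"

definition is_group_inverse :: "nat \<Rightarrow> (nat \<Rightarrow> nat \<Rightarrow> real) \<Rightarrow> (nat \<Rightarrow> nat \<Rightarrow> real) \<Rightarrow> bool" where
  "is_group_inverse n A X \<longleftrightarrow>
     (\<forall>i<n. \<forall>j<n.
        mmul n (mmul n A X) A i j = A i j \<and>
        mmul n (mmul n X A) X i j = X i j \<and>
        mmul n A X i j = mmul n X A i j)"

definition adj :: "nat \<Rightarrow> (nat \<Rightarrow> nat \<Rightarrow> real) \<Rightarrow> nat \<Rightarrow> nat \<Rightarrow> bool" where
  "adj n M i j \<longleftrightarrow> i < n \<and> j < n \<and> i \<noteq> j \<and> M i j \<noteq> 0"

definition is_walk :: "nat \<Rightarrow> (nat \<Rightarrow> nat \<Rightarrow> real) \<Rightarrow> nat list \<Rightarrow> bool" where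
  "is_walk n M xs \<longleftrightarrow> xs \<noteq> [] \<and> set xs \<subseteq> {..<n} \<and>
     (\<forall>k. Suc k < length xs \<longrightarrow> adj n M (xs ! k) (xs ! Suc k))"

definition graph_connected :: "nat \<Rightarrow> (nat \<Rightarrow> nat \<Rightarrow> real) \<Rightarrow> bool" where
  "graph_connected n M \<longleftrightarrow>
     (\<forall>u<n. \<forall>v<n. \<exists>xs. is_walk n M xs \<and> hd xs = u \<and> last xs = v)"

definition has_cycle :: "nat \<Rightarrow> (nat \<Rightarrow> nat \<Rightarrow> real) \<Rightarrow> bool" where
  "has_cycle n M \<longleftrightarrow>
     (\<exists>xs. is_walk n M xs \<and> distinct xs \<and> length xs \<ge> 3 \<and> adj n M (last xs) (hd xs))"

definition is_tree :: "nat \<Rightarrow> (nat \<Rightarrow> nat \<Rightarrow> real) \<Rightarrow> bool" where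
  "is_tree n M \<longleftrightarrow> n \<ge> 1 \<and> graph_connected n M \<and> \<not> has_cycle n M"

definition weighted_tree :: "nat \<Rightarrow> (nat \<Rightarrow> nat \<Rightarrow> real) \<Rightarrow> bool" where
  "weighted_tree n A \<longleftrightarrow>
     (\<forall>i<n. \<forall>j<n. A i j = A j i) \<and> (\<forall>i<n. A i i = 0) \<and> is_tree n A"

definition degree :: "nat \<Rightarrow> (nat \<Rightarrow> nat \<Rightarrow> real) \<Rightarrow> nat \<Rightarrow> nat" where
  "degree n M v = card {u. adj n M v u}"

definition is_star :: "nat \<Rightarrow> (nat \<Rightarrow> nat \<Rightarrow> real) \<Rightarrow> bool" where
  "is_star n M \<longleftrightarrow> is_tree n M \<and> (\<exists>c<n. \<forall>v<n. v \<noteq> c \<longrightarrow> adj n M c v)"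

definition has_adjacent_pendant_edges :: "nat \<Rightarrow> (nat \<Rightarrow> nat \<Rightarrow> real) \<Rightarrow> bool" where
  "has_adjacent_pendant_edges n M \<longleftrightarrow>
     (\<exists>u v w. v \<noteq> w \<and> adj n M u v \<and> adj n M u w \<and>
        degree n M v = 1 \<and> degree n M w = 1)"

end

theory Submission
  imports Defs
begin

(* From X = XAX = A X^2, the row of X at a pendant vertex v with neighbour u is A_vu times
   row u of X^2, so two pendant vertices at u have rows of X with the same support. X is
   symmetric, being the unique group inverse of the symmetric A, and in the tree X two such
   vertices can only be leaves with a common neighbour q, so row v of X is X_vq e_q.
   Reading A = AXA = X A^2 at row v gives A_vk = X_vq (A^2)_qk. If q = u, then
   (A^2)_uk = 0 for all k \<noteq> u, which in a tree means that u is adjacent to every other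
   vertex. If q \<noteq> u, then (A^2)_qq = 0; as A is symmetric this is the sum of squares of
   row q, so that row vanishes, contradicting A_vu = X_vq (A^2)_qu. *)

lemma mmul_assoc: "mmul n (mmul n A B) C = mmul n A (mmul n B C)"
proof (intro ext)
  fix i j
  show "mmul n (mmul n A B) C i j = mmul n A (mmul n B C) i j"
    unfolding mmul_def sum_distrib_left sum_distrib_right
    by (subst sum.swap) (simp add: mult.assoc)
qed

lemma semigroup_mmul: "semigroup (mmul n)"
  by unfold_locales (rule mmul_assoc)

lemma (in semigroup) group_inverse_unique:
  assumes x: "a \<^bold>* x \<^bold>* a = a" "x \<^bold>* a \<^bold>* x = x" "a \<^bold>* x = x \<^bold>* a"
    and y: "a \<^bold>* y \<^bold>* a = a" "y \<^bold>* a \<^bold>* y = y" "a \<^bold>* y = y \<^bold>* a"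
  shows "x = y"
proof -
  have "a \<^bold>* x = a \<^bold>* y \<^bold>* a \<^bold>* x" using y(1) by simp
  also have "\<dots> = y \<^bold>* a \<^bold>* (x \<^bold>* a)" by (simp add: assoc y(3) flip: x(3))
  also have "\<dots> = y \<^bold>* a" using x(1) by (simp add: assoc flip: x(3))
  finally have ax_ay: "a \<^bold>* x = a \<^bold>* y" using y(3) by simp
  have "x = x \<^bold>* (a \<^bold>* y)" using x(2) ax_ay by (simp add: assoc)
  also have "\<dots> = a \<^bold>* y \<^bold>* y" using x(3) ax_ay by (metis assoc)
  also have "\<dots> = y" using y(2,3) by simp
  finally show ?thesis .
qed

text \<open>Entries outside {..<n} x {..<n} are unconstrained by is_group_inverse; after
  truncation its conditions become identities of functions, to which semigroup reasoning
  applies.\<close>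

definition mtrunc :: "nat \<Rightarrow> (nat \<Rightarrow> nat \<Rightarrow> real) \<Rightarrow> nat \<Rightarrow> nat \<Rightarrow> real" where
  "mtrunc n B i j = (if i < n \<and> j < n then B i j else 0)"

definition mtranspose :: "(nat \<Rightarrow> nat \<Rightarrow> real) \<Rightarrow> nat \<Rightarrow> nat \<Rightarrow> real" where
  "mtranspose B i j = B j i"

lemma mtrunc_eq_iff: "mtrunc n A = mtrunc n B \<longleftrightarrow> (\<forall>i<n. \<forall>j<n. A i j = B i j)"
  by (auto simp: mtrunc_def fun_eq_iff)

lemma mmul_mtrunc: "mmul n (mtrunc n A) (mtrunc n B) = mtrunc n (mmul n A B)"
  by (auto simp: fun_eq_iff mmul_def mtrunc_def intro!: sum.cong)

lemma mtranspose_mmul: "mtranspose (mmul n A B) = mmul n (mtranspose B) (mtranspose A)"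
  by (auto simp: fun_eq_iff mtranspose_def mmul_def mult.commute intro!: sum.cong)

lemma mtranspose_mtrunc: "mtranspose (mtrunc n A) = mtrunc n (mtranspose A)"
  by (auto simp: fun_eq_iff mtranspose_def mtrunc_def)

lemma mtrunc_group_inverse:
  assumes "is_group_inverse n A X"
  shows "mmul n (mmul n (mtrunc n A) (mtrunc n X)) (mtrunc n A) = mtrunc n A"
    and "mmul n (mmul n (mtrunc n X) (mtrunc n A)) (mtrunc n X) = mtrunc n X"
    and "mmul n (mtrunc n A) (mtrunc n X) = mmul n (mtrunc n X) (mtrunc n A)"
  using assms by (simp_all add: mmul_mtrunc mtrunc_eq_iff is_group_inverse_def)

lemma group_inverse_symmetric:
  assumes gi: "is_group_inverse n A X" and sym: "\<forall>i<n. \<forall>j<n. A i j = A j i"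
  shows "\<forall>i<n. \<forall>j<n. X i j = X j i"
proof -
  let ?A = "mtrunc n A" and ?X = "mtrunc n X" and ?Xt = "mtranspose (mtrunc n X)"
  note G = mtrunc_group_inverse[OF gi]
  have At: "mtranspose ?A = ?A"
    unfolding fun_eq_iff mtranspose_def mtrunc_def using sym by simp
  have "mmul n (mmul n ?A ?Xt) ?A = ?A"
    using arg_cong[OF G(1), of mtranspose] by (simp only: mtranspose_mmul At mmul_assoc)
  moreover have "mmul n (mmul n ?Xt ?A) ?Xt = ?Xt"
    using arg_cong[OF G(2), of mtranspose] by (simp only: mtranspose_mmul At mmul_assoc)
  moreover have "mmul n ?A ?Xt = mmul n ?Xt ?A"
    using arg_cong[OF G(3), of mtranspose] by (simp only: mtranspose_mmul At)
  ultimately have "?X = ?Xt"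
    using semigroup.group_inverse_unique[OF semigroup_mmul, of n ?A ?X ?Xt] G by blast
  thus ?thesis unfolding mtranspose_mtrunc mtrunc_eq_iff mtranspose_def .
qed

lemma group_inverse_eq_mmul_square:
  assumes "is_group_inverse n A X" "i < n" "k < n"
  shows "X i k = mmul n A (mmul n X X) i k"
proof -
  note G = mtrunc_group_inverse[OF assms(1)]
  have "mtrunc n X = mmul n (mmul n (mtrunc n A) (mtrunc n X)) (mtrunc n X)"
    using G(2,3) by simp
  hence "mtrunc n X = mtrunc n (mmul n A (mmul n X X))"
    by (simp add: mmul_mtrunc mmul_assoc)
  thus ?thesis using assms(2,3) unfolding mtrunc_eq_iff by blast
qed

lemma group_inverse_square_eq:
  assumes "is_group_inverse n A X" "i < n" "k < n"
  shows "A i k = mmul n X (mmul n A A) i k"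
proof -
  note G = mtrunc_group_inverse[OF assms(1)]
  have "mtrunc n A = mmul n (mmul n (mtrunc n X) (mtrunc n A)) (mtrunc n A)"
    using G(1,3) by simp
  hence "mtrunc n A = mtrunc n (mmul n X (mmul n A A))"
    by (simp add: mmul_mtrunc mmul_assoc)
  thus ?thesis using assms(2,3) unfolding mtrunc_eq_iff by blast
qed

definition single_entry_row :: "nat \<Rightarrow> (nat \<Rightarrow> nat \<Rightarrow> real) \<Rightarrow> nat \<Rightarrow> nat \<Rightarrow> bool" where
  "single_entry_row n M v j \<longleftrightarrow> M v j \<noteq> 0 \<and> (\<forall>m<n. m \<noteq> j \<longrightarrow> M v m = 0)"

lemma mmul_single_entry_row:
  assumes "single_entry_row n B v j" "j < n"
  shows "mmul n B C v k = B v j * C j k"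
proof -
  have "mmul n B C v k = (\<Sum>m<n. if m = j then B v j * C j k else 0)"
    using assms(1) unfolding mmul_def single_entry_row_def by (intro sum.cong) auto
  also have "\<dots> = B v j * C j k" using assms(2) by simp
  finally show ?thesis .
qed

lemma list_step_out_of_set:
  "xs \<noteq> [] \<Longrightarrow> hd xs \<in> S \<Longrightarrow> last xs \<notin> S \<Longrightarrow>
   \<exists>k. Suc k < length xs \<and> xs ! k \<in> S \<and> xs ! Suc k \<notin> S"
proof (induction xs)
  case Nil
  thus ?case by simp
next
  case (Cons x xs)
  show ?case
  proof (cases "xs \<noteq> [] \<and> hd xs \<in> S")
    case True
    then obtain k where "Suc k < length xs" "xs ! k \<in> S" "xs ! Suc k \<notin> S"
      using Cons by auto
    thus ?thesis by (intro exI[of _ "Suc k"]) auto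
  next
    case outside: False
    show ?thesis
    proof (cases "xs = []")
      case True
      thus ?thesis using Cons.prems by simp
    next
      case nonempty: False
      hence "xs ! 0 \<notin> S" using outside by (simp add: hd_conv_nth)
      thus ?thesis using nonempty Cons.prems by (intro exI[of _ 0]) auto
    qed
  qed
qed

lemma graph_connected_edge_out_of_set:
  assumes "graph_connected n M" "a < n" "b < n" "a \<in> S" "b \<notin> S"
  obtains p q where "p \<in> S" "q \<notin> S" "adj n M p q"
proof -
  obtain xs where xs: "is_walk n M xs" "hd xs = a" "last xs = b"
    using assms unfolding graph_connected_def by blast
  then obtain k where "Suc k < length xs" "xs ! k \<in> S" "xs ! Suc k \<notin> S"
    using list_step_out_of_set[of xs S] assms by (auto simp: is_walk_def)
  thus ?thesis using xs(1) that unfolding is_walk_def by blast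
qed

lemma adj_sym:
  assumes "\<forall>i<n. \<forall>j<n. M i j = M j i" "adj n M i j"
  shows "adj n M j i"
  using assms unfolding adj_def by auto

lemma has_cycle_triangle:
  assumes "adj n M a b" "adj n M b c" "adj n M c a" "distinct [a, b, c]"
  shows "has_cycle n M"
  unfolding has_cycle_def
proof (intro exI[of _ "[a, b, c]"] conjI)
  show "is_walk n M [a, b, c]"
    unfolding is_walk_def using assms by (auto simp: adj_def less_Suc_eq nth_Cons')
qed (use assms in auto)

lemma has_cycle_quadrangle:
  assumes "adj n M a b" "adj n M b c" "adj n M c d" "adj n M d a" "distinct [a, b, c, d]"
  shows "has_cycle n M"
  unfolding has_cycle_def
proof (intro exI[of _ "[a, b, c, d]"] conjI)
  show "is_walk n M [a, b, c, d]"
    unfolding is_walk_def using assms by (auto simp: adj_def less_Suc_eq nth_Cons')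
qed (use assms in auto)

lemma acyclic_common_neighbour_unique:
  assumes sym: "\<forall>i<n. \<forall>j<n. M i j = M j i" and acyclic: "\<not> has_cycle n M"
    and "adj n M u p" "adj n M p q" "adj n M u m" "adj n M m q" "u \<noteq> q"
  shows "m = p"
proof (rule ccontr)
  assume "m \<noteq> p"
  moreover have "adj n M q m" "adj n M m u" using assms adj_sym by blast+
  ultimately have "has_cycle n M"
    using assms by (intro has_cycle_quadrangle[of n M u p q m]) (auto simp: adj_def)
  with acyclic show False ..
qed

lemma weighted_tree_mmul_self_path2:
  assumes wt: "weighted_tree n A" and up: "adj n A u p" and pq: "adj n A p q" and "u \<noteq> q"
  shows "mmul n A A u q = A u p * A p q"
proof -
  have sym: "\<forall>i<n. \<forall>j<n. A i j = A j i" and dg: "\<forall>i<n. A i i = 0"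
    and acyclic: "\<not> has_cycle n A"
    using wt unfolding weighted_tree_def is_tree_def by auto
  have "A u m * A m q = 0" if "m < n" "m \<noteq> p" for m
  proof (rule ccontr)
    assume "A u m * A m q \<noteq> 0"
    hence "adj n A u m" "adj n A m q"
      using that up pq dg by (auto simp: adj_def)
    thus False
      using acyclic_common_neighbour_unique[OF sym acyclic up pq] that \<open>u \<noteq> q\<close> by blast
  qed
  hence "mmul n A A u q = (\<Sum>m<n. if m = p then A u p * A p q else 0)"
    unfolding mmul_def by (intro sum.cong) auto
  also have "\<dots> = A u p * A p q" using up by (simp add: adj_def)
  finally show ?thesis .
qed

text \<open>A vertex q at distance two from u would give (A^2)_uq \<noteq> 0.\<close>

lemma weighted_tree_is_star_if_mmul_self_row_diagonal:
  assumes wt: "weighted_tree n A" and u: "u < n"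
    and zero: "\<forall>k<n. k \<noteq> u \<longrightarrow> mmul n A A u k = 0"
  shows "is_star n A"
proof -
  have tree: "is_tree n A" using wt unfolding weighted_tree_def by auto
  have "adj n A u k" if k: "k < n" "k \<noteq> u" for k
  proof (rule ccontr)
    assume "\<not> adj n A u k"
    moreover have "graph_connected n A" using tree unfolding is_tree_def by auto
    ultimately obtain p q where p: "p \<in> {u} \<union> {m. adj n A u m}"
      and q: "q \<notin> {u} \<union> {m. adj n A u m}" and pq: "adj n A p q"
      using graph_connected_edge_out_of_set[OF _ u k(1), of A "{u} \<union> {m. adj n A u m}"] k
      by auto
    have up: "adj n A u p" using p q pq by auto
    have "mmul n A A u q = A u p * A p q"
      using weighted_tree_mmul_self_path2[OF wt up pq] q by auto
    moreover have "A u p * A p q \<noteq> 0" using up pq by (simp add: adj_def)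
    moreover have "q < n" using pq by (simp add: adj_def)
    ultimately show False using zero q by auto
  qed
  thus ?thesis unfolding is_star_def using tree u by blast
qed

lemma pendant_single_entry_row:
  assumes wt: "weighted_tree n A" and uv: "adj n A u v" and deg: "degree n A v = 1"
  shows "single_entry_row n A v u"
proof -
  have sym: "\<forall>i<n. \<forall>j<n. A i j = A j i" and dg: "\<forall>i<n. A i i = 0"
    using wt unfolding weighted_tree_def by auto
  have vu: "adj n A v u" using adj_sym[OF sym uv] .
  obtain z where "{m. adj n A v m} = {z}"
    using deg unfolding degree_def by (rule card_1_singletonE)
  hence nbrs: "{m. adj n A v m} = {u}" using vu by auto
  have "A v m = 0" if "m < n" "m \<noteq> u" for m
    using that nbrs dg vu by (auto simp: adj_def)
  thus ?thesis using vu unfolding single_entry_row_def adj_def by blast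
qed

lemma tree_twins_single_entry_row:
  assumes sym: "\<forall>i<n. \<forall>j<n. M i j = M j i" and tree: "is_tree n M"
    and v: "v < n" and w: "w < n" and u: "u < n" and distinct: "distinct [u, v, w]"
    and twins: "\<forall>k<n. M v k \<noteq> 0 \<longleftrightarrow> M w k \<noteq> 0"
  obtains q where "q < n" "single_entry_row n M v q"
proof -
  have conn: "graph_connected n M" and acyclic: "\<not> has_cycle n M"
    using tree unfolding is_tree_def by auto
  have vw: "M v w = 0"
  proof (rule ccontr)
    assume "M v w \<noteq> 0"
    obtain p q where "p \<in> {v, w}" "q \<notin> {v, w}" "adj n M p q"
      using graph_connected_edge_out_of_set[OF conn v u, of "{v, w}"] distinct by auto
    hence "adj n M v q" "adj n M w q" using twins sym v w by (auto simp: adj_def)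
    moreover have "adj n M v w" using \<open>M v w \<noteq> 0\<close> v w distinct by (simp add: adj_def)
    ultimately have "has_cycle n M"
      using \<open>q \<notin> {v, w}\<close> distinct adj_sym[OF sym]
      by (intro has_cycle_triangle[of n M v w q]) auto
    with acyclic show False ..
  qed
  hence vv: "M v v = 0" using twins sym v w by auto
  obtain q where vq: "adj n M v q"
    using graph_connected_edge_out_of_set[OF conn v w, of "{v}"] distinct by auto
  have q: "q < n" "q \<noteq> w" "q \<noteq> v" using vq vw by (auto simp: adj_def)
  have "M v m = 0" if m: "m < n" "m \<noteq> q" for m
  proof (rule ccontr)
    assume "M v m \<noteq> 0"
    hence "m \<noteq> v" "m \<noteq> w" "adj n M v m" "adj n M w m" "adj n M w q"
      using vv vw twins vq v w m sym distinct by (auto simp: adj_def)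
    hence "has_cycle n M"
      using vq q m adj_sym[OF sym] distinct
      by (intro has_cycle_quadrangle[of n M v q w m]) auto
    with acyclic show False ..
  qed
  thus ?thesis using that q vq unfolding single_entry_row_def adj_def by blast
qed

lemma group_inverse_single_entry_rows_is_star:
  assumes gi: "is_group_inverse n A X" and wt: "weighted_tree n A"
    and rowA: "single_entry_row n A v u" and rowX: "single_entry_row n X v j"
    and v: "v < n" and u: "u < n" and j: "j < n"
  shows "is_star n A"
proof -
  have sym: "\<forall>i<n. \<forall>j<n. A i j = A j i" using wt unfolding weighted_tree_def by auto
  have x: "X v j \<noteq> 0" using rowX unfolding single_entry_row_def ..
  have A_row: "A v k = X v j * mmul n A A j k" if "k < n" for k
    using group_inverse_square_eq[OF gi v that] mmul_single_entry_row[OF rowX j] by simp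
  show ?thesis
  proof (cases "j = u")
    case True
    have "mmul n A A u k = 0" if "k < n" "k \<noteq> u" for k
      using A_row[OF that(1)] rowA that x True unfolding single_entry_row_def by auto
    thus ?thesis using weighted_tree_is_star_if_mmul_self_row_diagonal[OF wt u] by blast
  next
    case False
    hence "mmul n A A j j = 0"
      using A_row[OF j] rowA j x unfolding single_entry_row_def by auto
    hence "(\<Sum>m<n. (A j m)\<^sup>2) = 0"
      using sym j unfolding mmul_def by (simp add: power2_eq_square)
    hence "\<forall>m<n. A j m = 0" by (simp add: sum_nonneg_eq_0_iff)
    hence "A v u = 0" using A_row[OF u] unfolding mmul_def by simp
    with rowA show ?thesis unfolding single_entry_row_def by simp
  qed
qed

theorem lemma2p8:
  fixes n :: nat and A X :: "nat \<Rightarrow> nat \<Rightarrow> real"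
  assumes "weighted_tree n A"
    and "\<not> is_star n A"
    and "has_adjacent_pendant_edges n A"
    and "is_group_inverse n A X"
  shows "\<not> is_tree n X"
proof
  assume tree: "is_tree n X"
  obtain u v w where "v \<noteq> w" and uv: "adj n A u v" and uw: "adj n A u w"
    and "degree n A v = 1" "degree n A w = 1"
    using assms(3) unfolding has_adjacent_pendant_edges_def by blast
  hence rowv: "single_entry_row n A v u" and roww: "single_entry_row n A w u"
    using pendant_single_entry_row[OF assms(1)] by blast+
  have n: "u < n" "v < n" "w < n" and distinct: "distinct [u, v, w]"
    using uv uw \<open>v \<noteq> w\<close> by (auto simp: adj_def)
  have "X i k = A i u * mmul n X X u k" if "single_entry_row n A i u" "i < n" "k < n" for i k
    using group_inverse_eq_mmul_square[OF assms(4) that(2,3)] mmul_single_entry_row[OF that(1)] n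
    by simp
  hence "\<forall>k<n. X v k \<noteq> 0 \<longleftrightarrow> X w k \<noteq> 0"
    using rowv roww n unfolding single_entry_row_def by auto
  moreover have "\<forall>i<n. \<forall>j<n. X i j = X j i"
    using group_inverse_symmetric[OF assms(4)] assms(1) unfolding weighted_tree_def by blast
  ultimately obtain q where "q < n" "single_entry_row n X v q"
    using tree_twins_single_entry_row[OF _ tree n(2,3,1) distinct] by blast
  hence "is_star n A"
    using group_inverse_single_entry_rows_is_star[OF assms(4,1) rowv] n by blast
  with assms(2) show False ..
qed

end
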